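(* Let $\gamma$ be a gauge on $\mathbb{R}^d$ with skewness $\sigma$, let $(D,w)$ and $(C,v)$ be finite positively weighted sets with $\sigma v_C<w_D$, and let $x$ be a Fermat–Weber point of $(D,w)+(C,v)$. Then there exist $e\in\mathbb{R}^d$ and $w_e\in(0,w_D/\sigma)$ such that $x$ is a Fermat–Weber point of $(D,w)+(e,w_e)$.
   Context: A gauge $\gamma$ on $\mathbb{R}^d$ is the Minkowski functional of a convex compact set $B_\gamma$ with the origin in its interior (not necessarily symmetric); its skewness is $\sigma=\sup_{x\ne0}\gamma(x)/\gamma(-x)$. For a weighted set, $w_D=\sum_{d\in D}w_d$. $(D,w)+(C,v)$ denotes $D\cup C$ with weight $w_x+v_x$ at $x$ (zero weight outside the respective set). A Fermat–Weber point of a finite positively weighted set $(S,u)$ is a minimizer of $x\mapsto\sum_{s\in S}u_s\gamma(x-s)$. *)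

theory Defs
  imports "HOL-Analysis.Analysis"
begin

text \<open>A gauge is the Minkowski functional of a convex compact set with the origin in its interior.\<close>
definition gauge_set :: "'a::euclidean_space set \<Rightarrow> bool" where
  "gauge_set B \<longleftrightarrow> convex B \<and> compact B \<and> 0 \<in> interior B"

definition gauge :: "'a::euclidean_space set \<Rightarrow> 'a \<Rightarrow> real" where
  "gauge B x = Inf {t. t \<ge> 0 \<and> x \<in> (\<lambda>y. t *\<^sub>R y) ` B}"

definition skewness :: "'a::euclidean_space set \<Rightarrow> real" where
  "skewness B = (SUP x\<in>-{0}. gauge B x / gauge B (-x))"

text \<open>Weighted sets are pairs (S, u) with S finite and u the weight function.\<close>
definition wsum :: "'a set \<Rightarrow> ('a \<Rightarrow> real) \<Rightarrow> real" where
  "wsum S u = (\<Sum>s\<in>S. u s)"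

definition wadd :: "'a set \<times> ('a \<Rightarrow> real) \<Rightarrow> 'a set \<times> ('a \<Rightarrow> real) \<Rightarrow> 'a set \<times> ('a \<Rightarrow> real)" where
  "wadd Dw Cv = (fst Dw \<union> fst Cv,
     \<lambda>x. (if x \<in> fst Dw then snd Dw x else 0) + (if x \<in> fst Cv then snd Cv x else 0))"

definition fw_obj :: "'a::euclidean_space set \<Rightarrow> 'a set \<times> ('a \<Rightarrow> real) \<Rightarrow> 'a \<Rightarrow> real" where
  "fw_obj B Su x = (\<Sum>s\<in>fst Su. snd Su s * gauge B (x - s))"

definition fermat_weber_point :: "'a::euclidean_space set \<Rightarrow> 'a set \<times> ('a \<Rightarrow> real) \<Rightarrow> 'a \<Rightarrow> bool" where
  "fermat_weber_point B Su x \<longleftrightarrow> (\<forall>y. fw_obj B Su x \<le> fw_obj B Su y)"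

end

theory Submission
  imports Defs
begin

text \<open>Both Fermat--Weber objectives are convex, so separating the epigraph of one from the
  hypograph of the other at the minimiser \<open>x\<close> of their sum yields a vector \<open>g\<close> such that
  \<open>-g\<close> is a subgradient at \<open>x\<close> of the objective of \<open>(D, w)\<close> and \<open>g\<close> one of the objective
  of \<open>(C, v)\<close>. By the triangle inequality for \<open>\<gamma>\<close>, the latter gives
  \<open>\<langle>g, h\<rangle> \<le> v\<^sub>C \<gamma>(h)\<close>, hence \<open>\<lambda> = max\<^sub>b\<^sub>\<in>\<^sub>B \<langle>g, b\<rangle> \<le> v\<^sub>C < w\<^sub>D / \<sigma>\<close>. If \<open>b\<^sub>0\<close>
  attains this maximum, then \<open>g\<close> is also a subgradient at \<open>x\<close> of \<open>\<lambda> \<gamma>(\<cdot> - (x - b\<^sub>0))\<close>, so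
  \<open>x\<close> is a Fermat--Weber point of \<open>(D, w) + (x - b\<^sub>0, \<lambda>)\<close>. If \<open>\<lambda> = 0\<close>, then \<open>x\<close> already
  minimises the objective of \<open>(D, w)\<close>, and any small weight placed at \<open>x\<close> will do.\<close>

section \<open>Gauges\<close>

lemma gauge_le_scale:
  assumes "t \<ge> 0" "y \<in> B"
  shows "gauge B (t *\<^sub>R y) \<le> t"
  unfolding gauge_def
  by (rule cInf_lower) (use assms in \<open>auto intro: bdd_belowI[of _ 0]\<close>)

lemma gauge_le_one: "y \<in> B \<Longrightarrow> gauge B y \<le> 1"
  using gauge_le_scale[of 1 y B] by simp

lemma gauge_set_zero_mem: "gauge_set B \<Longrightarrow> 0 \<in> B"
  unfolding gauge_set_def using interior_subset by blast

lemma gauge_set_cball: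
  assumes "gauge_set B"
  obtains r where "r > 0" "cball 0 r \<subseteq> B"
  using assms unfolding gauge_set_def using mem_interior_cball by blast

lemma cball_rescale_mem:
  assumes "r > 0" "cball 0 r \<subseteq> B"
  shows "(r / norm x) *\<^sub>R x \<in> B" and "x = (norm x / r) *\<^sub>R ((r / norm x) *\<^sub>R x)"
proof -
  show "(r / norm x) *\<^sub>R x \<in> B"
    using assms by (intro subsetD[OF assms(2)]) (cases "x = 0"; simp)
  show "x = (norm x / r) *\<^sub>R ((r / norm x) *\<^sub>R x)"
    using assms by (cases "x = 0") simp_all
qed

lemma gauge_le_norm_divide:
  assumes "r > 0" "cball 0 r \<subseteq> B"
  shows "gauge B x \<le> norm x / r"
  using gauge_le_scale[OF _ cball_rescale_mem(1)[OF assms], of "norm x / r" x]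
    cball_rescale_mem(2)[OF assms, of x] assms(1) by simp

lemma gauge_greatest:
  assumes "gauge_set B"
    and "\<And>t y. t \<ge> 0 \<Longrightarrow> y \<in> B \<Longrightarrow> x = t *\<^sub>R y \<Longrightarrow> c \<le> t"
  shows "c \<le> gauge B x"
  unfolding gauge_def
proof (rule cInf_greatest)
  obtain r where r: "r > 0" "cball 0 r \<subseteq> B" using gauge_set_cball[OF assms(1)] .
  have "norm x / r \<in> {t. 0 \<le> t \<and> x \<in> (\<lambda>y. t *\<^sub>R y) ` B}"
    using image_eqI[where f="\<lambda>y. (norm x / r) *\<^sub>R y", OF cball_rescale_mem(2,1)[OF r]] r(1)
    by simp
  then show "{t. 0 \<le> t \<and> x \<in> (\<lambda>y. t *\<^sub>R y) ` B} \<noteq> {}" by blast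
qed (use assms(2) in auto)

lemma gauge_nonneg: "gauge_set B \<Longrightarrow> 0 \<le> gauge B x"
  by (rule gauge_greatest) auto

lemma gauge_zero:
  assumes "gauge_set B"
  shows "gauge B 0 = 0"
  using gauge_le_scale[of 0 0 B] gauge_set_zero_mem[OF assms] gauge_nonneg[OF assms, of 0]
  by simp

lemma norm_divide_le_gauge:
  assumes "gauge_set B" "R > 0" "\<forall>y\<in>B. norm y \<le> R"
  shows "norm x / R \<le> gauge B x"
proof (rule gauge_greatest[OF assms(1)])
  fix t y assume "0 \<le> t" "y \<in> B" "x = t *\<^sub>R y"
  then have "norm x \<le> t * R" using assms by (simp add: mult_left_mono)
  then show "norm x / R \<le> t" using assms by (simp add: divide_le_eq)
qed

lemma gauge_triangle:
  assumes "gauge_set B"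
  shows "gauge B (x + y) \<le> gauge B x + gauge B y"
proof -
  have sum_le: "gauge B (x + y) \<le> t + s"
    if "t \<ge> 0" "a \<in> B" "x = t *\<^sub>R a" "s \<ge> 0" "b \<in> B" "y = s *\<^sub>R b" for t a s b
  proof (cases "t + s = 0")
    case True
    then have "t = 0" "s = 0" using that by auto
    then show ?thesis using that gauge_zero[OF assms] by simp
  next
    case False
    then have ts: "t + s > 0" using that by auto
    have "x + y = (t + s) *\<^sub>R ((t / (t + s)) *\<^sub>R a + (s / (t + s)) *\<^sub>R b)"
      using that ts by (simp add: scaleR_add_right)
    moreover have "(t / (t + s)) *\<^sub>R a + (s / (t + s)) *\<^sub>R b \<in> B"
      using assms that ts unfolding gauge_set_def by (intro mem_convex_alt) auto
    ultimately show ?thesis using gauge_le_scale[of "t + s" _ B] ts by auto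
  qed
  have "gauge B (x + y) - gauge B y \<le> gauge B x"
  proof (rule gauge_greatest[OF assms])
    fix t a assume ta: "0 \<le> t" "a \<in> B" "x = t *\<^sub>R a"
    have "gauge B (x + y) - t \<le> gauge B y"
      by (rule gauge_greatest[OF assms]) (use sum_le ta in fastforce)
    then show "gauge B (x + y) - gauge B y \<le> t" by simp
  qed
  then show ?thesis by simp
qed

lemma gauge_scaleR_le:
  assumes "gauge_set B" "a \<ge> 0"
  shows "gauge B (a *\<^sub>R x) \<le> a * gauge B x"
proof (cases "a = 0")
  case True
  then show ?thesis using gauge_zero[OF assms(1)] by simp
next
  case False
  then have a: "a > 0" using assms by simp
  have "gauge B (a *\<^sub>R x) / a \<le> gauge B x"
  proof (rule gauge_greatest[OF assms(1)])
    fix t y assume "0 \<le> t" "y \<in> B" "x = t *\<^sub>R y"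
    then have "gauge B (a *\<^sub>R x) \<le> a * t" using gauge_le_scale[of "a * t" y B] a by simp
    then show "gauge B (a *\<^sub>R x) / a \<le> t" using a by (simp add: divide_le_eq mult.commute)
  qed
  then show ?thesis using a by (simp add: divide_le_eq mult.commute)
qed

lemma convex_on_gauge_diff:
  assumes "gauge_set B"
  shows "convex_on UNIV (\<lambda>y. gauge B (y - c))"
  unfolding convex_on_def
proof (intro conjI convex_UNIV ballI allI impI)
  fix a b and u v :: real
  assume uv: "0 \<le> u" "0 \<le> v" "u + v = 1"
  then have eq: "u *\<^sub>R a + v *\<^sub>R b - c = u *\<^sub>R (a - c) + v *\<^sub>R (b - c)"
    by (simp add: algebra_simps flip: scaleR_add_left)
  show "gauge B (u *\<^sub>R a + v *\<^sub>R b - c) \<le> u * gauge B (a - c) + v * gauge B (b - c)"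
    using gauge_triangle[OF assms, of "u *\<^sub>R (a - c)" "v *\<^sub>R (b - c)"]
      gauge_scaleR_le[OF assms uv(1), of "a - c"] gauge_scaleR_le[OF assms uv(2), of "b - c"]
    unfolding eq by linarith
qed

text \<open>From \<open>cball 0 r \<subseteq> B \<subseteq> cball 0 R\<close>, every ratio \<open>\<gamma>(z)/\<gamma>(-z)\<close> lies in \<open>(0, R/r]\<close>,
  so the supremum is taken over a bounded set of positive numbers.\<close>
lemma skewness_pos:
  assumes "gauge_set B"
  shows "skewness B > 0"
proof -
  obtain r where r: "r > 0" "cball 0 r \<subseteq> B" using gauge_set_cball[OF assms] .
  obtain R where R: "R > 0" "\<forall>y\<in>B. norm y \<le> R"
    using assms unfolding gauge_set_def using compact_imp_bounded bounded_pos by metis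
  have ratio_bounds: "0 < gauge B z / gauge B (-z) \<and> gauge B z / gauge B (-z) \<le> R / r"
    if "z \<noteq> 0" for z
  proof -
    have "norm z / R \<le> gauge B z" "norm z / R \<le> gauge B (-z)"
      using norm_divide_le_gauge[OF assms R, of z] norm_divide_le_gauge[OF assms R, of "-z"] by auto
    moreover have "norm z / R > 0" using that R by simp
    moreover have "gauge B z \<le> norm z / r" by (rule gauge_le_norm_divide[OF r])
    ultimately have "gauge B z / gauge B (-z) \<le> (norm z / r) / (norm z / R)"
      by (intro frac_le) auto
    also have "\<dots> = R / r" using that r R by (simp add: field_simps)
    finally show ?thesis using \<open>norm z / R \<le> gauge B z\<close> \<open>norm z / R \<le> gauge B (-z)\<close>
      \<open>norm z / R > 0\<close> by simp
  qed
  obtain z :: 'a where "z \<noteq> 0" using nonzero_Basis nonempty_Basis by blast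
  have "gauge B z / gauge B (-z) \<le> skewness B"
    unfolding skewness_def
    by (rule cSUP_upper) (use \<open>z \<noteq> 0\<close> ratio_bounds in \<open>auto intro!: bdd_aboveI[of _ "R / r"]\<close>)
  then show ?thesis using ratio_bounds[OF \<open>z \<noteq> 0\<close>] by simp
qed

text \<open>If \<open>b\<^sub>0\<close> maximises \<open>\<langle>g, \<cdot>\<rangle>\<close> on \<open>B\<close>, then \<open>\<langle>g, b\<^sub>0\<rangle>\<close> is the dual gauge of \<open>g\<close>.\<close>
lemma inner_le_gauge_mult:
  assumes "gauge_set B" "b\<^sub>0 \<in> B" "\<forall>y\<in>B. inner g y \<le> inner g b\<^sub>0"
  shows "inner g h \<le> inner g b\<^sub>0 * gauge B h"
proof (cases "inner g b\<^sub>0 = 0")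
  case True
  obtain r where "r > 0" "cball 0 r \<subseteq> B" using gauge_set_cball[OF assms(1)] .
  from cball_rescale_mem[OF this, of h] assms(3) True \<open>r > 0\<close>
  show ?thesis by (metis divide_nonneg_pos inner_scaleR_right mult_nonneg_nonpos mult_zero_left norm_ge_zero)
next
  case False
  then have pos: "inner g b\<^sub>0 > 0"
    using assms(3) gauge_set_zero_mem[OF assms(1)] by force
  have "inner g h / inner g b\<^sub>0 \<le> gauge B h"
  proof (rule gauge_greatest[OF assms(1)])
    fix t y assume ty: "0 \<le> t" "y \<in> B" "h = t *\<^sub>R y"
    then have "inner g h \<le> t * inner g b\<^sub>0" using assms(3) by (simp add: mult_left_mono)
    then show "inner g h / inner g b\<^sub>0 \<le> t" using pos by (simp add: divide_le_eq)
  qed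
  then show ?thesis using pos by (simp add: divide_le_eq mult.commute)
qed

section \<open>Subgradients at a minimiser of a sum of convex functions\<close>

lemma convex_on_sum_fun:
  assumes "convex S" "\<And>i. i \<in> I \<Longrightarrow> convex_on S (f i)"
  shows "convex_on S (\<lambda>x. \<Sum>i\<in>I. f i x)"
  using assms(2) by (induction I rule: infinite_finite_induct) (auto simp: convex_on_const assms(1))

lemma convex_strict_sublevel:
  assumes "convex_on UNIV f"
  shows "convex {p. f p < c}"
proof (rule convexI)
  fix p q and u v :: real
  assume "p \<in> {p. f p < c}" "q \<in> {p. f p < c}" and uv: "0 \<le> u" "0 \<le> v" "u + v = 1"
  then have "max (f p) (f q) < c" by simp
  have "f (u *\<^sub>R p + v *\<^sub>R q) \<le> u * f p + v * f q"
    using assms uv unfolding convex_on_def by blast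
  also have "\<dots> \<le> u * max (f p) (f q) + v * max (f p) (f q)"
    using uv by (intro add_mono mult_left_mono) auto
  also have "\<dots> = max (f p) (f q)" using uv by (simp flip: distrib_right)
  finally have "f (u *\<^sub>R p + v *\<^sub>R q) < c" using \<open>max (f p) (f q) < c\<close> by (rule le_less_trans)
  then show "u *\<^sub>R p + v *\<^sub>R q \<in> {p. f p < c}" by simp
qed

lemma le_add_mult_at_bound:
  fixes a b c \<alpha> :: real
  assumes "\<alpha> \<le> 0" "\<And>t. t < c \<Longrightarrow> b \<le> a + \<alpha> * t"
  shows "b \<le> a + \<alpha> * c"
proof (cases "\<alpha> = 0")
  case True
  then show ?thesis using assms(2)[of "c - 1"] by simp
next
  case False
  then have "\<alpha> < 0" using assms(1) by simp
  have "c \<le> (b - a) / \<alpha>"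
    by (rule dense_le) (use assms(2) \<open>\<alpha> < 0\<close> in \<open>simp add: le_divide_eq algebra_simps\<close>)
  then show ?thesis using \<open>\<alpha> < 0\<close> by (simp add: le_divide_eq algebra_simps)
qed

text \<open>A hyperplane separating the epigraph of \<open>f - f x\<close> from the strict hypograph of
  \<open>h x - h\<close> cannot be vertical; its slope is the common subgradient.\<close>
lemma convex_on_add_minimum_subgradient:
  fixes f h :: "'a::euclidean_space \<Rightarrow> real"
  assumes f: "convex_on UNIV f" and h: "convex_on UNIV h"
    and min: "\<And>y. f x + h x \<le> f y + h y"
  obtains g where "\<And>y. f x - inner g (y - x) \<le> f y" "\<And>y. h x + inner g (y - x) \<le> h y"
proof -
  define S where "S = epigraph UNIV (\<lambda>y. f y - f x)"
  define T where "T = {p :: 'a \<times> real. h (fst p) - h x + snd p < 0}"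
  have "convex S"
    unfolding S_def using f by (intro convex_epigraphI convex_on_diff) (simp_all add: concave_on_const)
  moreover have "convex T"
    unfolding T_def
  proof (rule convex_strict_sublevel, unfold convex_on_def, intro conjI convex_UNIV ballI allI impI)
    fix p q :: "'a \<times> real" and u v :: real
    assume uv: "0 \<le> u" "0 \<le> v" "u + v = 1"
    then have "h (fst (u *\<^sub>R p + v *\<^sub>R q)) \<le> u * h (fst p) + v * h (fst q)"
      using h unfolding convex_on_def by simp
    moreover have "h x = u * h x + v * h x" using uv by (simp flip: distrib_right)
    ultimately show "h (fst (u *\<^sub>R p + v *\<^sub>R q)) - h x + snd (u *\<^sub>R p + v *\<^sub>R q)
        \<le> u * (h (fst p) - h x + snd p) + v * (h (fst q) - h x + snd q)"
      by (simp add: algebra_simps)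
  qed
  moreover have "S \<inter> T = {}"
  proof -
    have False if "f y - f x \<le> t" "h y - h x + t < 0" for y t
      using min[of y] that by linarith
    then show ?thesis unfolding S_def T_def epigraph_def by fastforce
  qed
  moreover have "(x, 0) \<in> S" "(x, -1) \<in> T" unfolding S_def T_def epigraph_def by auto
  ultimately obtain a b where "a \<noteq> 0" "\<forall>p\<in>S. inner a p \<le> b" "\<forall>p\<in>T. b \<le> inner a p"
    using separating_hyperplane_sets by blast
  moreover obtain a\<^sub>1 \<alpha> where a: "a = (a\<^sub>1, \<alpha>)" by (cases a)
  ultimately have "a\<^sub>1 \<noteq> 0 \<or> \<alpha> \<noteq> 0"
    and hS: "\<And>y t. f y - f x \<le> t \<Longrightarrow> inner a\<^sub>1 y + \<alpha> * t \<le> b"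
    and hT: "\<And>y t. t < h x - h y \<Longrightarrow> b \<le> inner a\<^sub>1 y + \<alpha> * t"
    unfolding S_def T_def epigraph_def by (auto simp: algebra_simps zero_prod_def)
  have "\<alpha> \<le> 0" using hS[of x 1] hT[of "-1" x] by simp
  have hT': "b \<le> inner a\<^sub>1 y + \<alpha> * (h x - h y)" for y
    using le_add_mult_at_bound[OF \<open>\<alpha> \<le> 0\<close>] hT by blast
  have b: "b = inner a\<^sub>1 x" using hS[of x 0] hT'[of x] by simp
  have "\<alpha> \<noteq> 0"
  proof
    assume "\<alpha> = 0"
    then have "inner a\<^sub>1 y = b" for y using hS[of y "f y - f x"] hT'[of y] by simp
    from this[of a\<^sub>1] this[of 0] have "a\<^sub>1 = 0" by simp
    with \<open>\<alpha> = 0\<close> \<open>a\<^sub>1 \<noteq> 0 \<or> \<alpha> \<noteq> 0\<close> show False by simp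
  qed
  with \<open>\<alpha> \<le> 0\<close> have "\<alpha> < 0" by simp
  show ?thesis
  proof
    fix y
    have "inner a\<^sub>1 (y - x) \<le> (f x - f y) * \<alpha>"
      using hS[of y "f y - f x"] b by (simp add: inner_diff_right algebra_simps)
    then have "f x - f y \<le> inner a\<^sub>1 (y - x) / \<alpha>"
      using \<open>\<alpha> < 0\<close> by (simp add: neg_le_divide_eq)
    then show "f x - inner ((1 / \<alpha>) *\<^sub>R a\<^sub>1) (y - x) \<le> f y"
      by simp
    have "(h y - h x) * \<alpha> \<le> inner a\<^sub>1 (y - x)"
      using hT'[of y] b by (simp add: inner_diff_right algebra_simps)
    then have "inner a\<^sub>1 (y - x) / \<alpha> \<le> h y - h x"
      using \<open>\<alpha> < 0\<close> by (simp add: neg_divide_le_eq)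
    then show "h x + inner ((1 / \<alpha>) *\<^sub>R a\<^sub>1) (y - x) \<le> h y"
      by simp
  qed
qed

section \<open>Fermat--Weber objectives\<close>

lemma fw_obj_wadd:
  assumes "finite D" "finite C"
  shows "fw_obj B (wadd (D, w) (C, v)) y = fw_obj B (D, w) y + fw_obj B (C, v) y"
  using assms unfolding fw_obj_def wadd_def
  by (simp add: distrib_right sum.distrib if_distrib[where f="\<lambda>a. a * _"] sum.If_cases
      Int_absorb1 Int_absorb2 cong: if_cong)

lemma fw_obj_wadd_singleton:
  assumes "finite D"
  shows "fw_obj B (wadd (D, w) ({e}, \<lambda>_. c)) y = fw_obj B (D, w) y + c * gauge B (y - e)"
  using fw_obj_wadd[OF assms, of "{e}"] unfolding fw_obj_def by simp

lemma convex_on_fw_obj: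
  assumes "gauge_set B" "\<forall>s\<in>S. u s \<ge> 0"
  shows "convex_on UNIV (fw_obj B (S, u))"
  unfolding fw_obj_def fst_conv snd_conv
  using assms by (intro convex_on_sum_fun convex_on_cmul convex_on_gauge_diff) auto

lemma fw_obj_add_le:
  assumes "gauge_set B" "\<forall>s\<in>S. u s \<ge> 0"
  shows "fw_obj B (S, u) (x + h) \<le> fw_obj B (S, u) x + wsum S u * gauge B h"
proof -
  have "fw_obj B (S, u) (x + h) \<le> (\<Sum>s\<in>S. u s * (gauge B h + gauge B (x - s)))"
    unfolding fw_obj_def fst_conv snd_conv
  proof (rule sum_mono)
    fix s assume "s \<in> S"
    have "gauge B (x + h - s) \<le> gauge B h + gauge B (x - s)"
      using gauge_triangle[OF assms(1), of h "x - s"] by (simp add: algebra_simps)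
    then show "u s * gauge B (x + h - s) \<le> u s * (gauge B h + gauge B (x - s))"
      using assms(2) \<open>s \<in> S\<close> by (simp add: mult_left_mono)
  qed
  also have "\<dots> = fw_obj B (S, u) x + wsum S u * gauge B h"
    unfolding fw_obj_def wsum_def by (simp add: distrib_left sum.distrib sum_distrib_right)
  finally show ?thesis .
qed

lemma fermat_weber_point_wadd_self:
  assumes "gauge_set B" "finite D" "fermat_weber_point B (D, w) x" "c \<ge> 0"
  shows "fermat_weber_point B (wadd (D, w) ({x}, \<lambda>_. c)) x"
  using assms gauge_nonneg[OF assms(1)] gauge_zero[OF assms(1)]
  unfolding fermat_weber_point_def fw_obj_wadd_singleton[OF assms(2)]
  by (simp add: add_increasing2)

text \<open>\<open>g\<close> is a subgradient at \<open>x\<close> of \<open>\<langle>g, b\<^sub>0\<rangle> \<gamma>(\<cdot> - (x - b\<^sub>0))\<close>, while \<open>-g\<close> is one of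
  the objective of \<open>(D, w)\<close>.\<close>
lemma fermat_weber_point_wadd_dual_point:
  assumes "gauge_set B" "finite D"
    and sub: "\<And>y. fw_obj B (D, w) x - inner g (y - x) \<le> fw_obj B (D, w) y"
    and b\<^sub>0: "b\<^sub>0 \<in> B" "\<forall>y\<in>B. inner g y \<le> inner g b\<^sub>0"
  shows "fermat_weber_point B (wadd (D, w) ({x - b\<^sub>0}, \<lambda>_. inner g b\<^sub>0)) x"
  unfolding fermat_weber_point_def fw_obj_wadd_singleton[OF assms(2)]
proof
  fix y
  have "inner g (y - x) + inner g b\<^sub>0 \<le> inner g b\<^sub>0 * gauge B (y - (x - b\<^sub>0))"
    using inner_le_gauge_mult[OF assms(1) b\<^sub>0, of "y - (x - b\<^sub>0)"] by (simp add: inner_diff_right)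
  moreover have "inner g b\<^sub>0 * gauge B b\<^sub>0 \<le> inner g b\<^sub>0"
    using gauge_le_one[OF b\<^sub>0(1)] b\<^sub>0 gauge_set_zero_mem[OF assms(1)]
    by (metis inner_zero_right mult_left_le)
  ultimately show "fw_obj B (D, w) x + inner g b\<^sub>0 * gauge B (x - (x - b\<^sub>0))
      \<le> fw_obj B (D, w) y + inner g b\<^sub>0 * gauge B (y - (x - b\<^sub>0))"
    using sub[of y] by simp
qed

theorem mainTheorem18:
  fixes B :: "'a::euclidean_space set" and D C :: "'a set" and w v :: "'a \<Rightarrow> real" and x :: 'a
  assumes "gauge_set B"
    and "finite D" and "\<forall>d\<in>D. w d > 0"
    and "finite C" and "\<forall>c\<in>C. v c > 0"
    and "skewness B * wsum C v < wsum D w"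
    and "fermat_weber_point B (wadd (D, w) (C, v)) x"
  shows "\<exists>e we. 0 < we \<and> we < wsum D w / skewness B \<and>
           fermat_weber_point B (wadd (D, w) ({e}, \<lambda>_. we)) x"
proof -
  have w_nonneg: "\<forall>d\<in>D. w d \<ge> 0" and v_nonneg: "\<forall>c\<in>C. v c \<ge> 0"
    using assms(3,5) by (auto simp: less_imp_le)
  have min: "fw_obj B (D, w) x + fw_obj B (C, v) x \<le> fw_obj B (D, w) y + fw_obj B (C, v) y" for y
    using assms(7) unfolding fermat_weber_point_def fw_obj_wadd[OF assms(2,4)] by blast
  obtain g where sub_D: "\<And>y. fw_obj B (D, w) x - inner g (y - x) \<le> fw_obj B (D, w) y"
    and sub_C: "\<And>y. fw_obj B (C, v) x + inner g (y - x) \<le> fw_obj B (C, v) y"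
    by (rule convex_on_add_minimum_subgradient[OF
          convex_on_fw_obj[OF assms(1) w_nonneg] convex_on_fw_obj[OF assms(1) v_nonneg] min]) (rule that)
  have "compact B" using assms(1) unfolding gauge_set_def by blast
  then obtain b\<^sub>0 where b\<^sub>0: "b\<^sub>0 \<in> B" "\<forall>y\<in>B. inner g y \<le> inner g b\<^sub>0"
    using continuous_attains_sup[OF _ _ continuous_on_inner[OF continuous_on_const continuous_on_id]]
      gauge_set_zero_mem[OF assms(1)] by blast
  have "0 \<le> inner g b\<^sub>0" using b\<^sub>0(2) gauge_set_zero_mem[OF assms(1)] by force
  have "inner g b\<^sub>0 \<le> wsum C v * gauge B b\<^sub>0"
    using sub_C[of "x + b\<^sub>0"] fw_obj_add_le[OF assms(1) v_nonneg, of x b\<^sub>0] by simp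
  also have "\<dots> \<le> wsum C v"
    using gauge_le_one[OF b\<^sub>0(1)] v_nonneg unfolding wsum_def by (simp add: mult_left_le sum_nonneg)
  also have "\<dots> < wsum D w / skewness B"
    using assms(6) skewness_pos[OF assms(1)] by (simp add: less_divide_eq mult.commute)
  finally have "inner g b\<^sub>0 < wsum D w / skewness B" .
  have fw_dual: "fermat_weber_point B (wadd (D, w) ({x - b\<^sub>0}, \<lambda>_. inner g b\<^sub>0)) x"
    using fermat_weber_point_wadd_dual_point[OF assms(1,2) sub_D b\<^sub>0] .
  show ?thesis
  proof (cases "inner g b\<^sub>0 = 0")
    case True
    with fw_dual have "fermat_weber_point B (D, w) x"
      unfolding fermat_weber_point_def fw_obj_wadd_singleton[OF assms(2)] by simp
    moreover define c where "c = wsum D w / skewness B / 2"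
    moreover have "0 < c" "c < wsum D w / skewness B"
      using \<open>inner g b\<^sub>0 < wsum D w / skewness B\<close> True unfolding c_def by simp_all
    ultimately show ?thesis
      using fermat_weber_point_wadd_self[OF assms(1,2)] by (intro exI[of _ x] exI[of _ c]) simp
  next
    case False
    with \<open>0 \<le> inner g b\<^sub>0\<close> have "0 < inner g b\<^sub>0" by simp
    with fw_dual \<open>inner g b\<^sub>0 < wsum D w / skewness B\<close> show ?thesis
      by (intro exI[of _ "x - b\<^sub>0"] exI[of _ "inner g b\<^sub>0"]) simp
  qed
qed

end
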